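(* The variety $\mathsf{V}(S_{(4,413)})$ is the ai-semiring variety defined by the identities $xy\approx yx$, $x^2\approx x^2+x$, $x+xy\approx x^2+xy$, $x_1x_2x_3\approx x_1x_2x_3+x_4$, $x^2+yz\approx x^2+yz+xy$.
   Context: An ai-semiring is an algebra $(S,+,\cdot)$ with $(S,+)$ a semilattice, $(S,\cdot)$ a semigroup, and both distributive laws. $\mathsf{V}(S)$ is the variety generated by $S$; "the ai-semiring variety defined by identities $\Sigma$" is the class of all ai-semirings satisfying $\Sigma$. $S_{(4,413)}$ has carrier $\{1,2,3,4\}$; addition: $x+x=x$, $2+x=x$, $1+x=1$ for all $x$, $3+4=1$; multiplication (row $a$, column $b$ gives $a\cdot b$): row $1$: $1,1,1,1$; row $2$: $1,3,1,3$; row $3$: $1,1,1,1$; row $4$: $1,3,1,1$. *)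

theory Defs
  imports Main
begin

datatype trm = Var nat | Plus trm trm | Times trm trm

fun eval :: "('a \<Rightarrow> 'a \<Rightarrow> 'a) \<Rightarrow> ('a \<Rightarrow> 'a \<Rightarrow> 'a) \<Rightarrow> (nat \<Rightarrow> 'a) \<Rightarrow> trm \<Rightarrow> 'a" where
  "eval ad mu \<rho> (Var i) = \<rho> i"
| "eval ad mu \<rho> (Plus s t) = ad (eval ad mu \<rho> s) (eval ad mu \<rho> t)"
| "eval ad mu \<rho> (Times s t) = mu (eval ad mu \<rho> s) (eval ad mu \<rho> t)"

definition holds_in :: "'a set \<Rightarrow> ('a \<Rightarrow> 'a \<Rightarrow> 'a) \<Rightarrow> ('a \<Rightarrow> 'a \<Rightarrow> 'a) \<Rightarrow> trm \<Rightarrow> trm \<Rightarrow> bool" where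
  "holds_in A ad mu s t \<longleftrightarrow> (\<forall>\<rho>. (\<forall>i. \<rho> i \<in> A) \<longrightarrow> eval ad mu \<rho> s = eval ad mu \<rho> t)"

text \<open>An algebra (whole type 'b with add, mul) lies in the variety generated by the
  algebra (A, addA, mulA): it satisfies every identity satisfied by that algebra
  (by Birkhoff's HSP theorem, this is V(A)).\<close>
definition in_variety_generated ::
  "'a set \<Rightarrow> ('a \<Rightarrow> 'a \<Rightarrow> 'a) \<Rightarrow> ('a \<Rightarrow> 'a \<Rightarrow> 'a) \<Rightarrow> ('b \<Rightarrow> 'b \<Rightarrow> 'b) \<Rightarrow> ('b \<Rightarrow> 'b \<Rightarrow> 'b) \<Rightarrow> bool" where
  "in_variety_generated A addA mulA ad mu \<longleftrightarrow>
     (\<forall>s t. holds_in A addA mulA s t \<longrightarrow> holds_in UNIV ad mu s t)"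

definition ai_semiring :: "('a \<Rightarrow> 'a \<Rightarrow> 'a) \<Rightarrow> ('a \<Rightarrow> 'a \<Rightarrow> 'a) \<Rightarrow> bool" where
  "ai_semiring ad mu \<longleftrightarrow>
     (\<forall>x y z. ad (ad x y) z = ad x (ad y z)) \<and>
     (\<forall>x y. ad x y = ad y x) \<and>
     (\<forall>x. ad x x = x) \<and>
     (\<forall>x y z. mu (mu x y) z = mu x (mu y z)) \<and>
     (\<forall>x y z. mu x (ad y z) = ad (mu x y) (mu x z)) \<and>
     (\<forall>x y z. mu (ad x y) z = ad (mu x z) (mu y z))"

text \<open>S_(4,413) on carrier {1,2,3,4} \<subseteq> nat (values outside the carrier are irrelevant).\<close>
definition S_carrier :: "nat set" where "S_carrier = {1,2,3,4}"

definition S_add :: "nat \<Rightarrow> nat \<Rightarrow> nat" where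
  "S_add a b = (if a = b then a else if a = 2 then b else if b = 2 then a else 1)"

definition S_mul :: "nat \<Rightarrow> nat \<Rightarrow> nat" where
  "S_mul a b = (if (a = 2 \<and> (b = 2 \<or> b = 4)) \<or> (a = 4 \<and> b = 2) then 3 else 1)"

end

theory Submission
  imports Defs
begin

(* Every product of three elements is the greatest element for the order a <= b :<-> a + b = b,
  so modulo the identities a term is the join of a finite set of monomials: variables, quadratic
  monomials xy and one top monomial. An identity s = t then says that every monomial of s lies
  below the join of t and vice versa. The predicate covered lists the cases in which the five
  identities force a monomial m below the join of a set T; whenever it fails, a valuation in
  S_(4,413) maps all monomials of T into the down-set {2,3} of 3 and m outside it. Hence every
  identity of S_(4,413) follows from the five identities, which S_(4,413) itself satisfies. *)

(* Top stands for every monomial of degree at least three; these all coincide in the variety,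
  so any triple product may represent them. *)
datatype monomial = Lin nat | Quad nat nat | Top

fun eval_monomial :: "('a \<Rightarrow> 'a \<Rightarrow> 'a) \<Rightarrow> (nat \<Rightarrow> 'a) \<Rightarrow> monomial \<Rightarrow> 'a" where
  "eval_monomial mu \<rho> (Lin i) = \<rho> i"
| "eval_monomial mu \<rho> (Quad i j) = mu (\<rho> i) (\<rho> j)"
| "eval_monomial mu \<rho> Top = mu (mu (\<rho> 0) (\<rho> 0)) (\<rho> 0)"

fun monomial_mult :: "monomial \<Rightarrow> monomial \<Rightarrow> monomial" where
  "monomial_mult (Lin i) (Lin j) = Quad i j"
| "monomial_mult _ _ = Top"

fun monomials :: "trm \<Rightarrow> monomial set" where
  "monomials (Var i) = {Lin i}"
| "monomials (Plus s t) = monomials s \<union> monomials t"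
| "monomials (Times s t) = {monomial_mult a b | a b. a \<in> monomials s \<and> b \<in> monomials t}"

lemma finite_monomials: "finite (monomials t)"
  by (induction t) (auto intro: finite_image_set2)

lemma monomials_nonempty: "monomials t \<noteq> {}"
  by (induction t) auto

locale ai_semiring_triple_top =
  fixes ad mu :: "'a \<Rightarrow> 'a \<Rightarrow> 'a"
  assumes ai_semiring: "ai_semiring ad mu"
    and triple_product_top: "mu (mu x y) z = ad (mu (mu x y) z) w"
begin

lemma add_assoc: "ad (ad x y) z = ad x (ad y z)"
  and add_commute: "ad x y = ad y x"
  and add_idem: "ad x x = x"
  and mult_assoc: "mu (mu x y) z = mu x (mu y z)"
  and distrib_left: "mu x (ad y z) = ad (mu x y) (mu x z)"
  and distrib_right: "mu (ad x y) z = ad (mu x z) (mu y z)"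
  using ai_semiring unfolding ai_semiring_def by blast+

sublocale add: semilattice_set ad
  by unfold_locales (fact add_assoc add_commute add_idem)+

abbreviation below :: "'a \<Rightarrow> 'a \<Rightarrow> bool" (infix "\<preceq>" 50)
  where "a \<preceq> b \<equiv> ad a b = b"

lemma below_trans: "a \<preceq> b \<Longrightarrow> b \<preceq> c \<Longrightarrow> a \<preceq> c"
  by (metis add_assoc)

lemma below_antisym: "a \<preceq> b \<Longrightarrow> b \<preceq> a \<Longrightarrow> a = b"
  by (metis add_commute)

lemma below_add_left: "a \<preceq> ad a b"
  by (metis add_assoc add_idem)

lemma add_below: "a \<preceq> c \<Longrightarrow> b \<preceq> c \<Longrightarrow> ad a b \<preceq> c"
  by (metis add_assoc)

lemma F_below:
  assumes "finite A" "A \<noteq> {}" "\<forall>a\<in>A. a \<preceq> c"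
  shows "add.F A \<preceq> c"
  using assms by (induction A rule: finite_ne_induct) (auto intro: add_below)

lemma not_below_F:
  assumes "finite A" "A \<noteq> {}" "\<forall>a\<in>A. a \<preceq> c" "\<not> b \<preceq> c"
  shows "\<not> b \<preceq> add.F A"
  using assms F_below below_trans by blast

lemma mult_F_left:
  assumes "finite B" "B \<noteq> {}"
  shows "mu a (add.F B) = add.F (mu a ` B)"
  using add.hom_commute[of "mu a"] distrib_left assms by blast

lemma F_products:
  assumes "finite A" "A \<noteq> {}" "finite B" "B \<noteq> {}"
  shows "add.F {mu a b | a b. a \<in> A \<and> b \<in> B} = mu (add.F A) (add.F B)"
  using assms(1,2)
proof (induction A rule: finite_ne_induct)
  case (singleton a)
  have "{mu x b | x b. x \<in> {a} \<and> b \<in> B} = mu a ` B" by auto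
  then show ?case using mult_F_left assms(3,4) by simp
next
  case (insert a A)
  have "{mu x b | x b. x \<in> insert a A \<and> b \<in> B} = mu a ` B \<union> {mu x b | x b. x \<in> A \<and> b \<in> B}"
    by auto
  moreover have "finite {mu x b | x b. x \<in> A \<and> b \<in> B}"
    using insert.hyps(1) assms(3) by (auto intro: finite_image_set2)
  moreover have "{mu x b | x b. x \<in> A \<and> b \<in> B} \<noteq> {}"
    using insert.hyps(2) assms(4) by auto
  ultimately show ?case
    using insert assms(3,4) by (simp add: add.union mult_F_left distrib_right)
qed

lemma triple_products_eq: "mu (mu x y) z = mu (mu x' y') z'"
  by (metis add_commute triple_product_top)

lemma below_triple_product: "a \<preceq> mu (mu x y) z"
  by (metis add_commute triple_product_top)

lemma eval_monomial_mult:
  "eval_monomial mu \<rho> (monomial_mult a b) = mu (eval_monomial mu \<rho> a) (eval_monomial mu \<rho> b)"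
  by (cases a; cases b) (simp_all, (metis mult_assoc triple_products_eq)+)

abbreviation monomial_sum :: "(nat \<Rightarrow> 'a) \<Rightarrow> monomial set \<Rightarrow> 'a" where
  "monomial_sum \<rho> T \<equiv> add.F (eval_monomial mu \<rho> ` T)"

lemma eval_eq_monomial_sum: "eval ad mu \<rho> t = monomial_sum \<rho> (monomials t)"
proof (induction t)
  case (Plus s t)
  then show ?case by (simp add: image_Un add.union finite_monomials monomials_nonempty)
next
  case (Times s t)
  have "eval_monomial mu \<rho> ` monomials (Times s t) =
      {mu a b | a b. a \<in> eval_monomial mu \<rho> ` monomials s \<and> b \<in> eval_monomial mu \<rho> ` monomials t}"
    by (force simp: eval_monomial_mult)
  then show ?case using Times by (simp add: F_products finite_monomials monomials_nonempty)
qed simp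

end

definition has_quad :: "monomial set \<Rightarrow> nat \<Rightarrow> nat \<Rightarrow> bool" where
  "has_quad T x y \<longleftrightarrow> Quad x y \<in> T \<or> Quad y x \<in> T"

definition occurs_in_quad :: "monomial set \<Rightarrow> nat \<Rightarrow> bool" where
  "occurs_in_quad T x \<longleftrightarrow> (\<exists>y. has_quad T x y)"

definition square_covered :: "monomial set \<Rightarrow> nat \<Rightarrow> bool" where
  "square_covered T x \<longleftrightarrow> Quad x x \<in> T \<or> (Lin x \<in> T \<and> occurs_in_quad T x)"

(* covered m T holds iff the identities force m below the join of T:
  see covered_below_sum and S_separating_valuation. *)
fun covered :: "monomial \<Rightarrow> monomial set \<Rightarrow> bool" where
  "covered Top T \<longleftrightarrow> Top \<in> T"
| "covered (Lin x) T \<longleftrightarrow> Top \<in> T \<or> Lin x \<in> T \<or> Quad x x \<in> T"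
| "covered (Quad x y) T \<longleftrightarrow> Top \<in> T \<or> has_quad T x y
     \<or> (square_covered T x \<and> occurs_in_quad T y) \<or> (square_covered T y \<and> occurs_in_quad T x)"

lemma ball_monomial_iff:
  "(\<forall>m\<in>T. P m) \<longleftrightarrow>
     (\<forall>x. Lin x \<in> T \<longrightarrow> P (Lin x)) \<and> (\<forall>x y. Quad x y \<in> T \<longrightarrow> P (Quad x y)) \<and> (Top \<in> T \<longrightarrow> P Top)"
  by (metis monomial.exhaust)

locale S413_variety = ai_semiring_triple_top +
  assumes mult_commute: "mu x y = mu y x"
    and square_add_self: "mu x x = ad (mu x x) x"
    and add_mult_self: "ad x (mu x y) = ad (mu x x) (mu x y)"
    and square_add_mult: "ad (mu x x) (mu y z) = ad (ad (mu x x) (mu y z)) (mu x y)"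
begin

lemma self_below_square: "x \<preceq> mu x x"
  by (metis square_add_self add_commute)

lemma square_below_of_self_and_mult:
  assumes "x \<preceq> c" and "mu x y \<preceq> c"
  shows "mu x x \<preceq> c"
proof -
  have "ad x (mu x y) \<preceq> c" using assms by (rule add_below)
  then have "ad (mu x x) (mu x y) \<preceq> c" by (simp only: add_mult_self)
  then show ?thesis by (rule below_trans[OF below_add_left])
qed

lemma mult_below_of_square_and_mult:
  assumes "mu x x \<preceq> c" and "mu y z \<preceq> c"
  shows "mu x y \<preceq> c"
proof -
  have "mu x y \<preceq> ad (mu x x) (mu y z)" by (metis square_add_mult add_commute)
  moreover have "ad (mu x x) (mu y z) \<preceq> c" using assms by (rule add_below)
  ultimately show ?thesis by (rule below_trans)
qed

lemma monomial_below_sum: "finite T \<Longrightarrow> n \<in> T \<Longrightarrow> eval_monomial mu \<rho> n \<preceq> monomial_sum \<rho> T"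
  by (simp add: add.in_idem)

lemma has_quad_below_sum:
  "finite T \<Longrightarrow> has_quad T x y \<Longrightarrow> mu (\<rho> x) (\<rho> y) \<preceq> monomial_sum \<rho> T"
  using monomial_below_sum mult_commute unfolding has_quad_def by fastforce

lemma square_covered_below_sum:
  assumes "finite T" and "square_covered T x"
  shows "mu (\<rho> x) (\<rho> x) \<preceq> monomial_sum \<rho> T"
  using assms(2) unfolding square_covered_def occurs_in_quad_def
proof (elim disjE conjE exE)
  assume "Quad x x \<in> T"
  then show ?thesis using monomial_below_sum[OF assms(1)] by fastforce
next
  fix y assume "Lin x \<in> T" "has_quad T x y"
  then show ?thesis using assms(1) monomial_below_sum has_quad_below_sum
    by (fastforce intro: square_below_of_self_and_mult)
qed

lemma covered_below_sum:
  assumes "finite T" and "covered m T"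
  shows "eval_monomial mu \<rho> m \<preceq> monomial_sum \<rho> T"
proof -
  note mem = monomial_below_sum[OF assms(1)]
  have top: "a \<preceq> monomial_sum \<rho> T" if "Top \<in> T" for a
    using mem[OF that] below_triple_product below_trans by (metis eval_monomial.simps(3))
  note quad = has_quad_below_sum[OF assms(1)] and square = square_covered_below_sum[OF assms(1)]
  show ?thesis
  proof (cases m)
    case (Lin x)
    from assms(2) consider "Top \<in> T" | "Lin x \<in> T" | "Quad x x \<in> T"
      using Lin by auto
    then show ?thesis
    proof cases
      case 3
      then have "mu (\<rho> x) (\<rho> x) \<preceq> monomial_sum \<rho> T" using mem by fastforce
      then have "\<rho> x \<preceq> monomial_sum \<rho> T" by (rule below_trans[OF self_below_square])
      then show ?thesis using Lin by simp
    qed (use Lin top mem[of "Lin x"] in auto)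
  next
    case (Quad x y)
    from assms(2) consider "Top \<in> T" | "has_quad T x y"
      | z where "square_covered T x" "has_quad T y z" | z where "square_covered T y" "has_quad T x z"
      using Quad by (auto simp: occurs_in_quad_def)
    then show ?thesis
    proof cases
      case (3 z)
      have "mu (\<rho> x) (\<rho> y) \<preceq> monomial_sum \<rho> T"
        using square[OF 3(1)] quad[OF 3(2)] by (rule mult_below_of_square_and_mult)
      then show ?thesis using Quad by simp
    next
      case (4 z)
      have "mu (\<rho> y) (\<rho> x) \<preceq> monomial_sum \<rho> T"
        using square[OF 4(1)] quad[OF 4(2)] by (rule mult_below_of_square_and_mult)
      then show ?thesis using Quad by (simp add: mult_commute)
    qed (use Quad top quad in auto)
  next
    case Top
    then show ?thesis using assms(2) top by simp
  qed
qed

end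

interpretation S: S413_variety S_add S_mul
  by unfold_locales (auto simp: ai_semiring_def S_add_def S_mul_def)

lemma S_below_3_iff: "S_add a 3 = 3 \<longleftrightarrow> a = 2 \<or> a = 3"
  by (simp add: S_add_def)

(* Variables outside m are sent to 2; those of m to 3 or 4, chosen so that no monomial of T
  leaves {2,3}. *)
lemma S_separating_valuation:
  assumes "\<not> covered m T"
  obtains \<rho> where "\<forall>i. \<rho> i \<in> S_carrier"
    and "\<forall>n\<in>T. S_add (eval_monomial S_mul \<rho> n) 3 = 3"
    and "S_add (eval_monomial S_mul \<rho> m) 3 \<noteq> 3"
proof -
  have "\<exists>\<rho>. (\<forall>i. \<rho> i \<in> {2, 3, 4}) \<and> (\<forall>n\<in>T. eval_monomial S_mul \<rho> n \<in> {2, 3})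
      \<and> eval_monomial S_mul \<rho> m \<notin> {2, 3}"
  proof (cases m)
    case (Lin x)
    then show ?thesis
      using assms by (intro exI[of _ "(\<lambda>_. 2)(x := 4)"]) (auto simp: ball_monomial_iff S_mul_def)
  next
    case (Quad x y)
    show ?thesis
    proof (cases "square_covered T x")
      case True
      then show ?thesis using assms Quad
        by (intro exI[of _ "(\<lambda>_. 2)(y := 3)"])
          (auto simp: ball_monomial_iff S_mul_def occurs_in_quad_def has_quad_def)
    next
      case nx: False
      show ?thesis
      proof (cases "square_covered T y")
        case True
        then show ?thesis using assms Quad
          by (intro exI[of _ "(\<lambda>_. 2)(x := 3)"])
            (auto simp: ball_monomial_iff S_mul_def occurs_in_quad_def has_quad_def)
      next
        case ny: False
        show ?thesis using assms Quad nx ny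
          by (intro exI[of _ "(\<lambda>_. 2)(x := if Lin x \<in> T then 3 else 4, y := if Lin y \<in> T then 3 else 4)"])
            (auto simp: ball_monomial_iff S_mul_def square_covered_def occurs_in_quad_def has_quad_def)
      qed
    qed
  next
    case Top
    then show ?thesis
      using assms by (intro exI[of _ "\<lambda>_. 2"]) (auto simp: ball_monomial_iff S_mul_def)
  qed
  then show ?thesis
    using that by (auto simp: S_carrier_def S_below_3_iff)
qed

lemma covered_if_holds_in_S:
  assumes "holds_in S_carrier S_add S_mul s t" and "m \<in> monomials s"
  shows "covered m (monomials t)"
proof (rule ccontr)
  assume "\<not> covered m (monomials t)"
  then obtain \<rho> where \<rho>: "\<forall>i. \<rho> i \<in> S_carrier"
    and below_3: "\<forall>n\<in>monomials t. S_add (eval_monomial S_mul \<rho> n) 3 = 3"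
    and not_below_3: "S_add (eval_monomial S_mul \<rho> m) 3 \<noteq> 3"
    by (rule S_separating_valuation)
  have "S_add (eval_monomial S_mul \<rho> m) (eval S_add S_mul \<rho> s) = eval S_add S_mul \<rho> s"
    using assms(2) by (simp add: S.eval_eq_monomial_sum S.add.in_idem finite_monomials)
  moreover have "eval S_add S_mul \<rho> s = eval S_add S_mul \<rho> t"
    using assms(1) \<rho> unfolding holds_in_def by blast
  moreover have "S_add (eval_monomial S_mul \<rho> m) (eval S_add S_mul \<rho> t) \<noteq> eval S_add S_mul \<rho> t"
    unfolding S.eval_eq_monomial_sum
    by (rule S.not_below_F) (use below_3 not_below_3 finite_monomials monomials_nonempty in auto)
  ultimately show False by simp
qed

lemma (in S413_variety) eval_below_if_holds_in_S:
  assumes "holds_in S_carrier S_add S_mul s t"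
  shows "eval ad mu \<rho> s \<preceq> eval ad mu \<rho> t"
  unfolding eval_eq_monomial_sum
  using covered_below_sum covered_if_holds_in_S[OF assms]
  by (intro F_below) (auto simp: finite_monomials monomials_nonempty)

lemma (in S413_variety) eval_eq_if_holds_in_S:
  assumes "holds_in S_carrier S_add S_mul s t"
  shows "eval ad mu \<rho> s = eval ad mu \<rho> t"
proof (rule below_antisym)
  show "eval ad mu \<rho> s \<preceq> eval ad mu \<rho> t" using assms by (rule eval_below_if_holds_in_S)
  have "holds_in S_carrier S_add S_mul t s" using assms unfolding holds_in_def by simp
  then show "eval ad mu \<rho> t \<preceq> eval ad mu \<rho> s" by (rule eval_below_if_holds_in_S)
qed

lemma in_variety_generated_if_S413_variety:
  assumes "S413_variety ad mu"
  shows "in_variety_generated S_carrier S_add S_mul ad mu"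
  unfolding in_variety_generated_def
proof (intro allI impI)
  fix s t
  assume st: "holds_in S_carrier S_add S_mul s t"
  show "holds_in UNIV ad mu s t"
    unfolding holds_in_def
    using S413_variety.eval_eq_if_holds_in_S[OF assms st] by blast
qed

lemma in_variety_generated_eval_eq:
  assumes "in_variety_generated A addA mulA ad mu"
    and "\<And>\<rho>. eval addA mulA \<rho> s = eval addA mulA \<rho> t"
  shows "eval ad mu \<rho> s = eval ad mu \<rho> t"
  using assms unfolding in_variety_generated_def holds_in_def by blast

lemma ai_semiring_if_in_variety_generated:
  assumes "ai_semiring addA mulA" and "in_variety_generated A addA mulA ad mu"
  shows "ai_semiring ad mu"
proof -
  have A_add_assoc: "\<And>x y z. addA (addA x y) z = addA x (addA y z)"
    and A_add_commute: "\<And>x y. addA x y = addA y x"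
    and A_add_idem: "\<And>x. addA x x = x"
    and A_mult_assoc: "\<And>x y z. mulA (mulA x y) z = mulA x (mulA y z)"
    and A_distrib_left: "\<And>x y z. mulA x (addA y z) = addA (mulA x y) (mulA x z)"
    and A_distrib_right: "\<And>x y z. mulA (addA x y) z = addA (mulA x z) (mulA y z)"
    using assms(1) unfolding ai_semiring_def by blast+
  note transfer = in_variety_generated_eval_eq[OF assms(2)]
  let ?x = "Var 0" and ?y = "Var 1" and ?z = "Var 2"
  have "ad (ad x y) z = ad x (ad y z)" for x y z
    using transfer[of "Plus (Plus ?x ?y) ?z" "Plus ?x (Plus ?y ?z)" "(!) [x, y, z]"]
    by (simp add: A_add_assoc)
  moreover have "ad x y = ad y x" for x y
    using transfer[of "Plus ?x ?y" "Plus ?y ?x" "(!) [x, y]"] by (simp add: A_add_commute)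
  moreover have "ad x x = x" for x
    using transfer[of "Plus ?x ?x" "?x" "(!) [x]"] by (simp add: A_add_idem)
  moreover have "mu (mu x y) z = mu x (mu y z)" for x y z
    using transfer[of "Times (Times ?x ?y) ?z" "Times ?x (Times ?y ?z)" "(!) [x, y, z]"]
    by (simp add: A_mult_assoc)
  moreover have "mu x (ad y z) = ad (mu x y) (mu x z)" for x y z
    using transfer[of "Times ?x (Plus ?y ?z)" "Plus (Times ?x ?y) (Times ?x ?z)" "(!) [x, y, z]"]
    by (simp add: A_distrib_left)
  moreover have "mu (ad x y) z = ad (mu x z) (mu y z)" for x y z
    using transfer[of "Times (Plus ?x ?y) ?z" "Plus (Times ?x ?z) (Times ?y ?z)" "(!) [x, y, z]"]
    by (simp add: A_distrib_right)
  ultimately show ?thesis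
    unfolding ai_semiring_def by blast
qed

lemma S413_variety_if_in_variety_generated:
  assumes "in_variety_generated S_carrier S_add S_mul ad mu"
  shows "S413_variety ad mu"
proof
  show "ai_semiring ad mu"
    using S.ai_semiring assms by (rule ai_semiring_if_in_variety_generated)
  note transfer = in_variety_generated_eval_eq[OF assms]
  let ?x = "Var 0" and ?y = "Var 1" and ?z = "Var 2" and ?w = "Var 3"
  show "mu (mu x y) z = ad (mu (mu x y) z) w" for x y z w
    using transfer[of "Times (Times ?x ?y) ?z" "Plus (Times (Times ?x ?y) ?z) ?w" "(!) [x, y, z, w]"]
    by (simp add: S.triple_product_top[symmetric])
  show "mu x y = mu y x" for x y
    using transfer[of "Times ?x ?y" "Times ?y ?x" "(!) [x, y]"] by (simp add: S.mult_commute)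
  show "mu x x = ad (mu x x) x" for x
    using transfer[of "Times ?x ?x" "Plus (Times ?x ?x) ?x" "(!) [x]"]
    by (simp add: S.square_add_self[symmetric])
  show "ad x (mu x y) = ad (mu x x) (mu x y)" for x y
    using transfer[of "Plus ?x (Times ?x ?y)" "Plus (Times ?x ?x) (Times ?x ?y)" "(!) [x, y]"]
    by (simp add: S.add_mult_self)
  show "ad (mu x x) (mu y z) = ad (ad (mu x x) (mu y z)) (mu x y)" for x y z
    using transfer[of "Plus (Times ?x ?x) (Times ?y ?z)"
        "Plus (Plus (Times ?x ?x) (Times ?y ?z)) (Times ?x ?y)" "(!) [x, y, z]"]
    by (simp add: S.square_add_mult[symmetric])
qed

lemma S413_variety_iff:
  "S413_variety ad mu \<longleftrightarrow>
    ai_semiring ad mu \<and>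
    (\<forall>x y. mu x y = mu y x) \<and>
    (\<forall>x. mu x x = ad (mu x x) x) \<and>
    (\<forall>x y. ad x (mu x y) = ad (mu x x) (mu x y)) \<and>
    (\<forall>x1 x2 x3 x4. mu (mu x1 x2) x3 = ad (mu (mu x1 x2) x3) x4) \<and>
    (\<forall>x y z. ad (mu x x) (mu y z) = ad (ad (mu x x) (mu y z)) (mu x y))"
  unfolding S413_variety_def S413_variety_axioms_def ai_semiring_triple_top_def by blast

theorem proposition5p4:
  fixes ad mu :: "'a \<Rightarrow> 'a \<Rightarrow> 'a"
  shows "in_variety_generated S_carrier S_add S_mul ad mu \<longleftrightarrow>
    (ai_semiring ad mu \<and>
     (\<forall>x y. mu x y = mu y x) \<and>
     (\<forall>x. mu x x = ad (mu x x) x) \<and>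
     (\<forall>x y. ad x (mu x y) = ad (mu x x) (mu x y)) \<and>
     (\<forall>x1 x2 x3 x4. mu (mu x1 x2) x3 = ad (mu (mu x1 x2) x3) x4) \<and>
     (\<forall>x y z. ad (mu x x) (mu y z) = ad (ad (mu x x) (mu y z)) (mu x y)))"
  unfolding S413_variety_iff[symmetric]
  using S413_variety_if_in_variety_generated in_variety_generated_if_S413_variety by blast

end
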